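(* Let $\mathcal H$ be a separable complex Hilbert space and $S_2$ the Hilbert space of Hilbert–Schmidt operators on $\mathcal H$ with $\langle\eta,\tau\rangle_2=\operatorname{tr}(\eta^*\tau)$. Let $A$ be a non-zero operator in $\mathcal B(S_2)$ given by $A\eta=a\eta b$ with $a,b\in\mathcal B(\mathcal H)$. If $A\ge0$, then there exist $\hat a,\hat b\in\mathcal B(\mathcal H)$ with $\hat a,\hat b\ge0$ such that $A\eta=\hat a\eta\hat b$ for all $\eta\in S_2$. Moreover, $\hat a,\hat b$ are positive (resp. positive definite) if $A$ is positive (resp. positive definite).
   Context: For a bounded operator $T$ on a Hilbert space: $T\ge0$ if $\langle x,Tx\rangle\ge0$ for all $x$; $T$ positive if $\langle x,Tx\rangle>0$ for all $x\ne0$; positive definite if $\inf\{\langle x,Tx\rangle:\|x\|=1\}>0$. Inner products are anti-linear in the left argument. *)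

theory Defs
  imports "HOL-Analysis.Analysis" "HOL-Library.Complex_Order"
begin

text \<open>HOL-Analysis has only real inner product spaces, so complex ones are introduced
  here as type classes. The inner product is anti-linear in the LEFT argument.\<close>

class complex_vector = real_vector +
  fixes scaleC :: "complex \<Rightarrow> 'a \<Rightarrow> 'a" (infixr \<open>*\<^sub>C\<close> 75)
  assumes scaleC_add_right: "c *\<^sub>C (x + y) = c *\<^sub>C x + c *\<^sub>C y"
    and scaleC_add_left: "(c + d) *\<^sub>C x = c *\<^sub>C x + d *\<^sub>C x"
    and scaleC_scaleC: "c *\<^sub>C (d *\<^sub>C x) = (c * d) *\<^sub>C x"
    and scaleC_one: "1 *\<^sub>C x = x"
    and scaleR_scaleC: "scaleR r x = complex_of_real r *\<^sub>C x"

class complex_inner = complex_vector + real_normed_vector +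
  fixes cinner :: "'a \<Rightarrow> 'a \<Rightarrow> complex"
  assumes cinner_commute: "cinner x y = cnj (cinner y x)"
    and cinner_add_left: "cinner (x + y) z = cinner x z + cinner y z"
    and cinner_scaleC_left: "cinner (c *\<^sub>C x) y = cnj c * cinner x y"
    and cinner_ge_zero: "0 \<le> cinner x x"
    and cinner_eq_zero_iff: "cinner x x = 0 \<longleftrightarrow> x = 0"
    and norm_eq_sqrt_cinner: "norm x = sqrt (Re (cinner x x))"

class chilbert_space = complex_inner + complete_space

definition separable_space :: "'a::topological_space itself \<Rightarrow> bool" where
  "separable_space _ \<longleftrightarrow> (\<exists>D::'a set. countable D \<and> closure D = UNIV)"

definition bounded_clinear :: "('a::complex_inner \<Rightarrow> 'b::complex_inner) \<Rightarrow> bool" where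
  "bounded_clinear f \<longleftrightarrow>
     (\<forall>x y. f (x + y) = f x + f y) \<and> (\<forall>c x. f (c *\<^sub>C x) = c *\<^sub>C f x) \<and>
     (\<exists>K. \<forall>x. norm (f x) \<le> norm x * K)"

text \<open>T \<ge> 0, T positive, T positive definite (order on complex from Complex_Order:
  z \<ge> 0 iff z is real and nonnegative).\<close>
definition op_nonneg :: "('a::complex_inner \<Rightarrow> 'a) \<Rightarrow> bool" where
  "op_nonneg T \<longleftrightarrow> (\<forall>x. 0 \<le> cinner x (T x))"

definition op_pos :: "('a::complex_inner \<Rightarrow> 'a) \<Rightarrow> bool" where
  "op_pos T \<longleftrightarrow> (\<forall>x. x \<noteq> 0 \<longrightarrow> 0 < cinner x (T x))"

definition op_posdef :: "('a::complex_inner \<Rightarrow> 'a) \<Rightarrow> bool" where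
  "op_posdef T \<longleftrightarrow> (\<exists>c>0. \<forall>x. norm x = 1 \<longrightarrow> complex_of_real c \<le> cinner x (T x))"

definition cspan :: "'a::complex_vector set \<Rightarrow> 'a set" where
  "cspan E = {x. \<exists>F c. finite F \<and> F \<subseteq> E \<and> x = (\<Sum>e\<in>F. c e *\<^sub>C e)}"

definition is_onb :: "'a::complex_inner set \<Rightarrow> bool" where
  "is_onb E \<longleftrightarrow> (\<forall>e\<in>E. cinner e e = 1) \<and> (\<forall>e\<in>E. \<forall>f\<in>E. e \<noteq> f \<longrightarrow> cinner e f = 0)
     \<and> closure (cspan E) = UNIV"

definition hilbert_schmidt :: "('a::chilbert_space \<Rightarrow> 'a) \<Rightarrow> bool" where
  "hilbert_schmidt T \<longleftrightarrow> bounded_clinear T \<and>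
     (\<exists>E. is_onb E \<and> (\<lambda>e. (norm (T e))\<^sup>2) summable_on E)"

text \<open>The Hilbert--Schmidt inner product tr(eta^* tau) = sum over an orthonormal basis of
  the inner products of eta e and tau e (basis independent; a fixed basis is chosen).\<close>
definition hs_inner :: "('a::chilbert_space \<Rightarrow> 'a) \<Rightarrow> ('a \<Rightarrow> 'a) \<Rightarrow> complex" where
  "hs_inner \<eta> \<tau> = infsum (\<lambda>e. cinner (\<eta> e) (\<tau> e)) (SOME E. is_onb E)"

definition hs_norm :: "('a::chilbert_space \<Rightarrow> 'a) \<Rightarrow> real" where
  "hs_norm \<eta> = sqrt (Re (hs_inner \<eta> \<eta>))"

definition hs_op_nonneg :: "(('a::chilbert_space \<Rightarrow> 'a) \<Rightarrow> ('a \<Rightarrow> 'a)) \<Rightarrow> bool" where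
  "hs_op_nonneg A \<longleftrightarrow> (\<forall>\<eta>. hilbert_schmidt \<eta> \<longrightarrow> 0 \<le> hs_inner \<eta> (A \<eta>))"

definition hs_op_pos :: "(('a::chilbert_space \<Rightarrow> 'a) \<Rightarrow> ('a \<Rightarrow> 'a)) \<Rightarrow> bool" where
  "hs_op_pos A \<longleftrightarrow> (\<forall>\<eta>. hilbert_schmidt \<eta> \<and> \<eta> \<noteq> (\<lambda>_. 0) \<longrightarrow> 0 < hs_inner \<eta> (A \<eta>))"

definition hs_op_posdef :: "(('a::chilbert_space \<Rightarrow> 'a) \<Rightarrow> ('a \<Rightarrow> 'a)) \<Rightarrow> bool" where
  "hs_op_posdef A \<longleftrightarrow> (\<exists>c>0. \<forall>\<eta>. hilbert_schmidt \<eta> \<and> hs_norm \<eta> = 1 \<longrightarrow>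
                          complex_of_real c \<le> hs_inner \<eta> (A \<eta>))"

end

theory Submission
  imports Defs
begin

text \<open>For the rank-one operator \<open>x\<otimes>y\<^sup>* = \<langle>y, \<cdot>\<rangle> x\<close> one finds
  \<open>\<langle>x\<otimes>y\<^sup>*, A (x\<otimes>y\<^sup>*)\<rangle>\<^sub>2 = \<langle>x, a x\<rangle> \<langle>y, b y\<rangle>\<close>, so \<open>A \<ge> 0\<close> makes every such product of values
  of the quadratic forms of \<open>a\<close> and \<open>b\<close> nonnegative. Neither form vanishes identically
  (polarization, as \<open>A \<noteq> 0\<close>), hence all nonzero values of \<open>\<langle>x, a x\<rangle>\<close> have one common phase
  \<open>\<omega>\<close> and those of \<open>\<langle>y, b y\<rangle>\<close> the phase \<open>\<omega>\<^sup>-\<^sup>1\<close>. The factors \<open>\<omega>\<^sup>-\<^sup>1 a\<close> and \<open>\<omega> b\<close> are then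
  nonnegative and represent the same \<open>A\<close>; positivity and definiteness of \<open>A\<close> pass to them
  through the same products, since \<open>\<parallel>x\<otimes>y\<^sup>*\<parallel>\<^sub>2 = \<parallel>x\<parallel> \<parallel>y\<parallel>\<close>.\<close>

lemma scaleC_zero_left [simp]: "0 *\<^sub>C (x::'a::complex_vector) = 0"
  using scaleC_add_left[of 0 0 x] by simp

lemma scaleC_diff_left: "(c - d) *\<^sub>C (x::'a::complex_vector) = c *\<^sub>C x - d *\<^sub>C x"
  by (metis scaleC_add_left diff_add_cancel eq_diff_eq)

lemma cinner_add_right: "cinner x (y + z) = cinner x y + cinner x z"
  by (metis cinner_commute cinner_add_left complex_cnj_add)

lemma cinner_scaleC_right: "cinner x (c *\<^sub>C y) = c * cinner x y"
  by (metis cinner_commute cinner_scaleC_left complex_cnj_cnj complex_cnj_mult)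

lemma cinner_zero_left [simp]: "cinner 0 x = 0"
  using cinner_add_left[of 0 0 x] by simp

lemma cinner_zero_right [simp]: "cinner x 0 = 0"
  using cinner_add_right[of x 0 0] by simp

lemma cinner_diff_left: "cinner (x - y) z = cinner x z - cinner y z"
  by (metis cinner_add_left add_diff_cancel eq_diff_eq)

lemma cinner_diff_right: "cinner x (y - z) = cinner x y - cinner x z"
  by (metis cinner_add_right add_diff_cancel eq_diff_eq)

lemma cinner_sum_left: "cinner (\<Sum>i\<in>F. f i) y = (\<Sum>i\<in>F. cinner (f i) y)"
  by (induction F rule: infinite_finite_induct) (auto simp: cinner_add_left)

lemma cinner_sum_right: "cinner y (\<Sum>i\<in>F. f i) = (\<Sum>i\<in>F. cinner y (f i))"
  by (induction F rule: infinite_finite_induct) (auto simp: cinner_add_right)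

lemma cinner_self: "cinner x x = complex_of_real ((norm x)\<^sup>2)"
  using cinner_ge_zero[of x] norm_eq_sqrt_cinner[of x]
  by (auto simp: less_eq_complex_def complex_eq_iff)

lemma norm_scaleC: "norm (c *\<^sub>C (x::'a::complex_inner)) = cmod c * norm x"
proof -
  have "complex_of_real ((norm (c *\<^sub>C x))\<^sup>2) = cnj c * c * cinner x x"
    unfolding cinner_self[symmetric] by (simp add: cinner_scaleC_left cinner_scaleC_right)
  also have "\<dots> = complex_of_real ((cmod c * norm x)\<^sup>2)"
    by (simp add: cinner_self power_mult_distrib mult.commute flip: complex_norm_square)
  finally show ?thesis
    by (metis of_real_eq_iff norm_ge_zero mult_nonneg_nonneg power2_eq_imp_eq)
qed

lemma cinner_cauchy_schwarz: "cmod (cinner x y) \<le> norm x * norm y"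
proof (cases "y = 0")
  case False
  define N where "N = (norm y)\<^sup>2"
  have N: "N > 0" using False by (simp add: N_def)
  define t where "t = cinner y x / complex_of_real N"
  \<comment> \<open>\<open>t y\<close> is the orthogonal projection of \<open>x\<close> onto \<open>y\<close>\<close>
  have "0 \<le> Re (cinner (x - t *\<^sub>C y) (x - t *\<^sub>C y))"
    using cinner_ge_zero by (auto simp: less_eq_complex_def)
  also have "cinner (x - t *\<^sub>C y) (x - t *\<^sub>C y) =
      cinner x x - t * cinner x y - cnj t * cinner y x + cnj t * t * cinner y y"
    by (simp add: cinner_diff_left cinner_diff_right cinner_scaleC_left cinner_scaleC_right
        algebra_simps)
  also have "cinner y y = complex_of_real N" by (simp add: cinner_self N_def)
  also have "cnj t * t * complex_of_real N = cnj t * cinner y x"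
    using N by (simp add: t_def)
  also have "t * cinner x y = complex_of_real ((cmod (cinner x y))\<^sup>2 / N)"
  proof -
    have "cinner y x * cinner x y = complex_of_real ((cmod (cinner x y))\<^sup>2)"
      by (simp only: complex_norm_square cinner_commute[of y x] mult.commute)
    then show ?thesis by (simp add: t_def field_simps)
  qed
  finally have "(cmod (cinner x y))\<^sup>2 / N \<le> (norm x)\<^sup>2"
    by (simp add: cinner_self)
  then have "(cmod (cinner x y))\<^sup>2 \<le> (norm x)\<^sup>2 * (norm y)\<^sup>2"
    using N by (simp add: N_def field_simps)
  then show ?thesis
    by (metis norm_ge_zero mult_nonneg_nonneg power_mult_distrib power2_le_imp_le)
qed simp

lemma onb_cinner: "is_onb E \<Longrightarrow> e \<in> E \<Longrightarrow> f \<in> E \<Longrightarrow> cinner e f = (if e = f then 1 else 0)"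
  unfolding is_onb_def by metis

lemma onb_partial_sum_residual_orthogonal:
  assumes onb: "is_onb E" and F: "finite F" "F \<subseteq> E" "f \<in> F"
  shows "cinner f (y - (\<Sum>e\<in>F. cinner e y *\<^sub>C e)) = 0"
proof -
  have "cinner f (\<Sum>e\<in>F. cinner e y *\<^sub>C e) = (\<Sum>e\<in>F. cinner e y * cinner f e)"
    by (simp add: cinner_sum_right cinner_scaleC_right)
  also have "\<dots> = (\<Sum>e\<in>F. if e = f then cinner f y else 0)"
    using F by (intro sum.cong) (auto simp: onb_cinner[OF onb] subsetD)
  also have "\<dots> = cinner f y" using F by simp
  finally show ?thesis by (simp add: cinner_diff_right)
qed

lemma onb_partial_sum_best_approx:
  assumes onb: "is_onb E" and F: "finite F" "F \<subseteq> E"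
  shows "norm (y - (\<Sum>e\<in>F. cinner e y *\<^sub>C e)) \<le> norm (y - (\<Sum>e\<in>F. d e *\<^sub>C e))"
proof -
  define r where "r = y - (\<Sum>e\<in>F. cinner e y *\<^sub>C e)"
  define D where "D = (\<Sum>e\<in>F. (cinner e y - d e) *\<^sub>C e)"
  have Dr: "cinner D r = 0"
    using onb_partial_sum_residual_orthogonal[OF onb F]
    by (simp add: D_def r_def cinner_sum_left cinner_scaleC_left)
  have rD: "cinner r D = 0" using Dr cinner_commute[of r D] by simp
  have "(norm (r + D))\<^sup>2 = (norm r)\<^sup>2 + (norm D)\<^sup>2"
    using norm_eq_sqrt_cinner[of "r + D"] norm_eq_sqrt_cinner[of r] norm_eq_sqrt_cinner[of D]
      cinner_ge_zero[of r] cinner_ge_zero[of D]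
    by (simp add: cinner_add_left cinner_add_right Dr rD less_eq_complex_def)
  then have "norm r \<le> norm (r + D)"
    by (simp add: power2_le_imp_le)
  moreover have eq: "y - (\<Sum>e\<in>F. d e *\<^sub>C e) = r + D"
    by (simp add: r_def D_def scaleC_diff_left sum_subtractf)
  ultimately show ?thesis
    by (simp add: eq r_def)
qed

lemma has_sum_onb_expansion:
  assumes onb: "is_onb E"
  shows "((\<lambda>e. cinner e y *\<^sub>C e) has_sum y) E"
  unfolding has_sum_def tendsto_iff eventually_finite_subsets_at_top
proof (intro allI impI)
  fix \<epsilon> :: real assume "\<epsilon> > 0"
  have "y \<in> closure (cspan E)" using onb unfolding is_onb_def by auto
  then obtain w where w: "w \<in> cspan E" "dist w y < \<epsilon>"
    using \<open>\<epsilon> > 0\<close> unfolding closure_approachable by blast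
  then obtain G c where G: "finite G" "G \<subseteq> E" "w = (\<Sum>e\<in>G. c e *\<^sub>C e)"
    unfolding cspan_def by blast
  have close: "dist (\<Sum>e\<in>Y. cinner e y *\<^sub>C e) y < \<epsilon>"
    if Y: "finite Y" "G \<subseteq> Y" "Y \<subseteq> E" for Y
  proof -
    have wY: "w = (\<Sum>e\<in>Y. (if e \<in> G then c e else 0) *\<^sub>C e)"
      unfolding G(3) by (rule sum.mono_neutral_cong_right[symmetric]) (use Y in auto)
    have "norm (y - (\<Sum>e\<in>Y. cinner e y *\<^sub>C e)) \<le> norm (y - w)"
      unfolding wY using onb Y by (intro onb_partial_sum_best_approx)
    with w show ?thesis by (simp add: dist_norm norm_minus_commute)
  qed
  show "\<exists>X. finite X \<and> X \<subseteq> E \<and> (\<forall>Y. finite Y \<and> X \<subseteq> Y \<and> Y \<subseteq> E \<longrightarrow>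
      dist (\<Sum>e\<in>Y. cinner e y *\<^sub>C e) y < \<epsilon>)"
  proof (intro exI[of _ G] conjI allI impI)
    fix Y assume "finite Y \<and> G \<subseteq> Y \<and> Y \<subseteq> E"
    then show "dist (\<Sum>e\<in>Y. cinner e y *\<^sub>C e) y < \<epsilon>" by (intro close) auto
  qed (use G in auto)
qed

lemma bounded_clinear_add: "bounded_clinear f \<Longrightarrow> f (x + y) = f x + f y"
  unfolding bounded_clinear_def by blast

lemma bounded_clinear_scaleC: "bounded_clinear f \<Longrightarrow> f (c *\<^sub>C x) = c *\<^sub>C f x"
  unfolding bounded_clinear_def by blast

lemma bounded_clinear_zero: "bounded_clinear f \<Longrightarrow> f 0 = 0"
  using bounded_clinear_add[of f 0 0] by simp

lemma bounded_clinear_id: "bounded_clinear (\<lambda>x. x)"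
  unfolding bounded_clinear_def by (auto intro: exI[of _ 1])

lemma bounded_clinear_scaleC_left:
  assumes f: "bounded_clinear f"
  shows "bounded_clinear (\<lambda>x. k *\<^sub>C f x)"
proof -
  obtain K where K: "\<And>x. norm (f x) \<le> norm x * K"
    using f unfolding bounded_clinear_def by blast
  show ?thesis
    unfolding bounded_clinear_def
  proof (intro conjI allI exI)
    show "k *\<^sub>C f (x + y) = k *\<^sub>C f x + k *\<^sub>C f y" for x y
      by (simp add: bounded_clinear_add[OF f] scaleC_add_right)
    show "k *\<^sub>C f (c *\<^sub>C x) = c *\<^sub>C k *\<^sub>C f x" for c x
      by (simp add: bounded_clinear_scaleC[OF f] scaleC_scaleC mult.commute)
    show "norm (k *\<^sub>C f x) \<le> norm x * (cmod k * K)" for x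
      using mult_left_mono[OF K[of x] norm_ge_zero[of k]] by (simp add: norm_scaleC algebra_simps)
  qed
qed

definition rank_one :: "'a::complex_inner \<Rightarrow> 'a \<Rightarrow> 'a \<Rightarrow> 'a" where
  "rank_one x y = (\<lambda>z. cinner y z *\<^sub>C x)"

lemma bounded_clinear_rank_one: "bounded_clinear (rank_one x y)"
  unfolding bounded_clinear_def rank_one_def
proof (intro conjI allI exI)
  show "cinner y (u + v) *\<^sub>C x = cinner y u *\<^sub>C x + cinner y v *\<^sub>C x" for u v
    by (simp add: cinner_add_right scaleC_add_left)
  show "cinner y (c *\<^sub>C u) *\<^sub>C x = c *\<^sub>C cinner y u *\<^sub>C x" for c u
    by (simp add: cinner_scaleC_right scaleC_scaleC)
  show "norm (cinner y u *\<^sub>C x) \<le> norm u * (norm y * norm x)" for u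
    using mult_right_mono[OF cinner_cauchy_schwarz[of y u] norm_ge_zero[of x]]
    by (simp add: norm_scaleC algebra_simps)
qed

lemma rank_one_nonzero:
  assumes "x \<noteq> 0" "y \<noteq> 0"
  shows "rank_one x y \<noteq> (\<lambda>_. 0)"
proof -
  have "norm (rank_one x y y) = cmod (cinner y y) * norm x"
    by (simp add: rank_one_def norm_scaleC)
  with assms have "rank_one x y y \<noteq> 0"
    by (auto simp: cinner_eq_zero_iff)
  then show ?thesis by (auto simp: fun_eq_iff)
qed

lemma has_sum_rank_one_sandwich:
  assumes onb: "is_onb E" and a: "bounded_clinear a" and b: "bounded_clinear b"
  shows "((\<lambda>e. cinner (rank_one x y e) (a (rank_one x y (b e))))
           has_sum (cinner x (a x) * cinner y (b y))) E"
proof -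
  \<comment> \<open>the sum is this continuous functional applied to the basis expansion of \<open>y\<close>\<close>
  define h where "h z = cinner y (b z) * cinner x (a x)" for z
  obtain K where K: "\<And>z. norm (b z) \<le> norm z * K"
    using b unfolding bounded_clinear_def by blast
  have "bounded_linear h"
  proof (rule bounded_linear_intro[where K = "norm y * K * cmod (cinner x (a x))"])
    show "h (u + v) = h u + h v" for u v
      by (simp add: h_def bounded_clinear_add[OF b] cinner_add_right algebra_simps)
    show "h (r *\<^sub>R u) = r *\<^sub>R h u" for r u
      by (simp add: h_def scaleR_scaleC bounded_clinear_scaleC[OF b] cinner_scaleC_right
          scaleR_conv_of_real)
    show "norm (h u) \<le> norm u * (norm y * K * cmod (cinner x (a x)))" for u
    proof -
      have "cmod (cinner y (b u)) \<le> norm y * (norm u * K)"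
        using cinner_cauchy_schwarz[of y "b u"] K[of u] by (meson norm_ge_zero mult_left_mono order_trans)
      then have "cmod (cinner y (b u)) * cmod (cinner x (a x))
          \<le> norm y * (norm u * K) * cmod (cinner x (a x))"
        by (rule mult_right_mono) simp
      then show ?thesis
        by (simp add: h_def norm_mult algebra_simps)
    qed
  qed
  from has_sum_bounded_linear[OF this has_sum_onb_expansion[OF onb]]
  have "((\<lambda>e. h (cinner e y *\<^sub>C e)) has_sum h y) E" .
  moreover have "h (cinner e y *\<^sub>C e) = cinner (rank_one x y e) (a (rank_one x y (b e)))" for e
    using cinner_commute[of e y]
    by (simp add: h_def rank_one_def bounded_clinear_scaleC[OF a] bounded_clinear_scaleC[OF b]
        cinner_scaleC_left cinner_scaleC_right)
  ultimately show ?thesis by (simp add: h_def mult.commute)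
qed

lemma hs_inner_rank_one_sandwich:
  fixes x y :: "'a::chilbert_space"
  assumes onb: "is_onb (E::'a set)" and a: "bounded_clinear a" and b: "bounded_clinear b"
  shows "hs_inner (rank_one x y) (\<lambda>z. a (rank_one x y (b z))) = cinner x (a x) * cinner y (b y)"
proof -
  have "is_onb (SOME E::'a set. is_onb E)" using onb by (rule someI)
  then show ?thesis
    unfolding hs_inner_def by (rule infsumI[OF has_sum_rank_one_sandwich[OF _ a b]])
qed

lemma hilbert_schmidt_rank_one:
  fixes x y :: "'a::chilbert_space"
  assumes onb: "is_onb (E::'a set)"
  shows "hilbert_schmidt (rank_one x y)"
proof -
  have "((\<lambda>e. cinner (rank_one x y e) (rank_one x y e)) has_sum (cinner x x * cinner y y)) E"
    using has_sum_rank_one_sandwich[OF onb bounded_clinear_id bounded_clinear_id] by simp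
  from has_sum_bounded_linear[OF bounded_linear_Re this]
  have "((\<lambda>e. (norm (rank_one x y e))\<^sup>2) has_sum Re (cinner x x * cinner y y)) E"
    by (simp add: cinner_self del: of_real_power)
  then have "(\<lambda>e. (norm (rank_one x y e))\<^sup>2) summable_on E"
    by (auto simp: summable_on_def)
  with onb show ?thesis
    unfolding hilbert_schmidt_def using bounded_clinear_rank_one by blast
qed

lemma hs_norm_rank_one:
  fixes x y :: "'a::chilbert_space"
  assumes "is_onb (E::'a set)"
  shows "hs_norm (rank_one x y) = norm x * norm y"
  using hs_inner_rank_one_sandwich[OF assms bounded_clinear_id bounded_clinear_id, of x y]
  by (simp add: hs_norm_def cinner_self real_sqrt_mult flip: of_real_mult)

lemma eq_zero_if_quadratic_form_zero:
  assumes a: "bounded_clinear a" and form: "\<And>x. cinner x (a x) = 0"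
  shows "a w = 0"
proof -
  have polar: "cinner x (a y) + cinner y (a x) = 0" for x y
    using form[of "x + y"]
    by (simp add: bounded_clinear_add[OF a] cinner_add_left cinner_add_right form algebra_simps)
  have "cinner x (a y) = cinner y (a x)" for x y
    using polar[of x "\<i> *\<^sub>C y"]
    by (simp add: bounded_clinear_scaleC[OF a] cinner_scaleC_left cinner_scaleC_right
        flip: right_diff_distrib)
  with polar[of "a w" w] have "cinner (a w) (a w) = 0" by simp
  then show ?thesis by (simp add: cinner_eq_zero_iff)
qed

lemma quadratic_forms_nonzero_if_sandwich_nonzero:
  assumes a: "bounded_clinear a" and b: "bounded_clinear b" and \<eta>: "bounded_clinear \<eta>"
    and "a (\<eta> (b z)) \<noteq> 0"
  obtains x y where "cinner x (a x) \<noteq> 0" "cinner y (b y) \<noteq> 0"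
proof -
  have "b z \<noteq> 0"
    using assms(4) bounded_clinear_zero[OF \<eta>] bounded_clinear_zero[OF a] by auto
  with assms(4) show ?thesis
    using that eq_zero_if_quadratic_form_zero[OF a] eq_zero_if_quadratic_form_zero[OF b] by blast
qed

lemma forms_product_nonneg_if_hs_op_nonneg:
  fixes a b :: "'a::chilbert_space \<Rightarrow> 'a"
  assumes onb: "is_onb (E::'a set)" and a: "bounded_clinear a" and b: "bounded_clinear b"
    and A: "hs_op_nonneg (\<lambda>\<eta> x. a (\<eta> (b x)))"
  shows "0 \<le> cinner x (a x) * cinner y (b y)"
  using A hilbert_schmidt_rank_one[OF onb, of x y]
    hs_inner_rank_one_sandwich[OF onb a b, of x y]
  unfolding hs_op_nonneg_def by metis

lemma forms_product_pos_if_hs_op_pos: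
  fixes a b :: "'a::chilbert_space \<Rightarrow> 'a"
  assumes onb: "is_onb (E::'a set)" and a: "bounded_clinear a" and b: "bounded_clinear b"
    and A: "hs_op_pos (\<lambda>\<eta> x. a (\<eta> (b x)))" and "x \<noteq> 0" "y \<noteq> 0"
  shows "0 < cinner x (a x) * cinner y (b y)"
  using A hilbert_schmidt_rank_one[OF onb, of x y] rank_one_nonzero[OF \<open>x \<noteq> 0\<close> \<open>y \<noteq> 0\<close>]
    hs_inner_rank_one_sandwich[OF onb a b, of x y]
  unfolding hs_op_pos_def by metis

lemma forms_product_lower_bound_if_hs_op_posdef:
  fixes a b :: "'a::chilbert_space \<Rightarrow> 'a"
  assumes onb: "is_onb (E::'a set)" and a: "bounded_clinear a" and b: "bounded_clinear b"
    and A: "hs_op_posdef (\<lambda>\<eta> x. a (\<eta> (b x)))"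
  shows "\<exists>k>0. \<forall>x y. norm x = 1 \<longrightarrow> norm y = 1 \<longrightarrow>
           complex_of_real k \<le> cinner x (a x) * cinner y (b y)"
proof -
  obtain k where "k > 0" and k: "\<And>\<eta>. hilbert_schmidt \<eta> \<Longrightarrow> hs_norm \<eta> = 1 \<Longrightarrow>
      complex_of_real k \<le> hs_inner \<eta> (\<lambda>x. a (\<eta> (b x)))"
    using A unfolding hs_op_posdef_def by blast
  have "complex_of_real k \<le> cinner x (a x) * cinner y (b y)" if "norm x = 1" "norm y = 1" for x y
  proof -
    have "hs_norm (rank_one x y) = 1"
      using that hs_norm_rank_one[OF onb, of x y] by simp
    from k[OF hilbert_schmidt_rank_one[OF onb] this] show ?thesis
      using hs_inner_rank_one_sandwich[OF onb a b, of x y] by simp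
  qed
  with \<open>k > 0\<close> show ?thesis by blast
qed

lemma complex_nonneg_if_mult_pos_nonneg:
  fixes z p :: complex
  assumes "0 < p" "0 \<le> z * p"
  shows "0 \<le> z"
  using assms by (auto simp: less_eq_complex_def less_complex_def zero_le_mult_iff)

lemma complex_of_real_div_le_if_le_mult:
  fixes z p :: complex
  assumes "0 \<le> z" "0 \<le> p" "k > 0" "complex_of_real k \<le> z * p"
  shows "Re p > 0" "complex_of_real (k / Re p) \<le> z"
proof -
  have z: "Im z = 0" "Re z \<ge> 0" and p: "Im p = 0" "Re p \<ge> 0"
    using assms(1,2) by (auto simp: less_eq_complex_def)
  then have kzp: "k \<le> Re z * Re p"
    using assms(4) by (simp add: less_eq_complex_def)
  with p \<open>k > 0\<close> show "Re p > 0"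
    by (metis less_eq_real_def mult_zero_right not_less)
  with kzp z show "complex_of_real (k / Re p) \<le> z"
    by (simp add: less_eq_complex_def divide_le_eq)
qed

lemma common_phase_if_products_nonneg:
  fixes f :: "'a \<Rightarrow> complex" and g :: "'b \<Rightarrow> complex"
  assumes prod: "\<And>x y. 0 \<le> f x * g y" and "f x0 \<noteq> 0" "g y0 \<noteq> 0"
  obtains c where "c \<noteq> 0" "\<And>x. 0 \<le> c * f x" "\<And>y. 0 \<le> g y / c"
proof -
  define c where "c = g y0 / complex_of_real (cmod (g y0))"
  have c: "c \<noteq> 0" using \<open>g y0 \<noteq> 0\<close> by (simp add: c_def)
  have "0 \<le> c * f x" for x
  proof (rule complex_nonneg_if_mult_pos_nonneg)
    show "0 < complex_of_real (cmod (g y0))"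
      using \<open>g y0 \<noteq> 0\<close> by (simp add: less_complex_def)
    show "0 \<le> c * f x * complex_of_real (cmod (g y0))"
      using prod[of x y0] \<open>g y0 \<noteq> 0\<close> by (simp add: c_def mult.commute)
  qed
  moreover have "0 \<le> g y / c" for y
  proof (rule complex_nonneg_if_mult_pos_nonneg)
    show "0 < f x0 * g y0"
      using prod[of x0 y0] \<open>f x0 \<noteq> 0\<close> \<open>g y0 \<noteq> 0\<close> by (simp add: order_less_le)
    have "0 \<le> complex_of_real (cmod (g y0)) * (f x0 * g y)"
      using prod[of x0 y] by (simp add: less_eq_complex_def)
    then show "0 \<le> g y / c * (f x0 * g y0)"
      using \<open>g y0 \<noteq> 0\<close> by (simp add: c_def field_simps)
  qed
  ultimately show ?thesis using c that by blast
qed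

lemma op_pos_if_forms_product_pos:
  fixes S T :: "'a::complex_inner \<Rightarrow> 'a"
  assumes "op_nonneg S" "op_nonneg T"
    and pos: "\<And>x y. x \<noteq> 0 \<Longrightarrow> y \<noteq> 0 \<Longrightarrow> 0 < cinner x (S x) * cinner y (T y)"
  shows "op_pos S" "op_pos T"
proof -
  have "cinner x (S x) \<noteq> 0" "cinner x (T x) \<noteq> 0" if "x \<noteq> 0" for x
    using pos[OF that that] by auto
  with assms(1,2) show "op_pos S" "op_pos T"
    unfolding op_pos_def op_nonneg_def by (auto simp: order_less_le)
qed

lemma op_posdef_if_form_times_nonneg_ge:
  fixes S :: "'a::complex_inner \<Rightarrow> 'a" and t :: "'a \<Rightarrow> complex"
  assumes S: "op_nonneg S" and t: "\<And>y. 0 \<le> t y" and "k > 0"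
    and bound: "\<And>x y. norm x = 1 \<Longrightarrow> norm y = 1 \<Longrightarrow> complex_of_real k \<le> cinner x (S x) * t y"
  shows "op_posdef S"
proof (cases "\<exists>u::'a. norm u = 1")
  case True
  then obtain u :: 'a where u: "norm u = 1" by blast
  have Sx: "0 \<le> cinner x (S x)" for x
    using S unfolding op_nonneg_def by blast
  have lower: "Re (t u) > 0" "complex_of_real (k / Re (t u)) \<le> cinner x (S x)" if "norm x = 1" for x
    using complex_of_real_div_le_if_le_mult[OF Sx t \<open>k > 0\<close> bound[OF that u]] by auto
  have "k / Re (t u) > 0" using lower(1)[OF u] \<open>k > 0\<close> by simp
  with lower(2) show ?thesis unfolding op_posdef_def by blast
qed (use \<open>k > 0\<close> in \<open>auto simp: op_posdef_def\<close>)

lemma op_posdef_if_forms_product_lower_bound: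
  fixes S T :: "'a::complex_inner \<Rightarrow> 'a"
  assumes S: "op_nonneg S" and T: "op_nonneg T"
    and "\<exists>k>0. \<forall>x y. norm x = 1 \<longrightarrow> norm y = 1 \<longrightarrow>
           complex_of_real k \<le> cinner x (S x) * cinner y (T y)"
  shows "op_posdef S" "op_posdef T"
proof -
  obtain k where "k > 0" and k: "\<And>x y. norm x = 1 \<Longrightarrow> norm y = 1 \<Longrightarrow>
      complex_of_real k \<le> cinner x (S x) * cinner y (T y)"
    using assms(3) by blast
  have S_nonneg: "0 \<le> cinner y (S y)" and T_nonneg: "0 \<le> cinner y (T y)" for y
    using S T unfolding op_nonneg_def by blast+
  have k': "complex_of_real k \<le> cinner x (T x) * cinner y (S y)"
    if "norm x = 1" "norm y = 1" for x y
    using k[OF that(2,1)] by (simp add: mult.commute)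
  show "op_posdef S"
    by (rule op_posdef_if_form_times_nonneg_ge[OF S T_nonneg \<open>k > 0\<close> k])
  show "op_posdef T"
    by (rule op_posdef_if_form_times_nonneg_ge[OF T S_nonneg \<open>k > 0\<close> k'])
qed

lemma op_pos_op_posdef_of_nonneg_factors:
  fixes a b :: "'a::chilbert_space \<Rightarrow> 'a"
  assumes onb: "is_onb (E::'a set)" and ab: "bounded_clinear a" "bounded_clinear b"
    and nonneg: "op_nonneg a" "op_nonneg b"
  shows "hs_op_pos (\<lambda>\<eta> x. a (\<eta> (b x))) \<Longrightarrow> op_pos a \<and> op_pos b"
    and "hs_op_posdef (\<lambda>\<eta> x. a (\<eta> (b x))) \<Longrightarrow> op_posdef a \<and> op_posdef b"
  using op_pos_if_forms_product_pos[OF nonneg forms_product_pos_if_hs_op_pos[OF onb ab]]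
    op_posdef_if_forms_product_lower_bound[OF nonneg forms_product_lower_bound_if_hs_op_posdef[OF onb ab]]
  by blast+

lemma hs_op_order_cong:
  assumes "\<And>\<eta>. hilbert_schmidt \<eta> \<Longrightarrow> A \<eta> = B \<eta>"
  shows "hs_op_pos A = hs_op_pos B" "hs_op_posdef A = hs_op_posdef B"
  using assms by (auto simp: hs_op_pos_def hs_op_posdef_def)

lemma scaleC_sandwich_cancel:
  assumes "bounded_clinear a" "bounded_clinear \<eta>" "c \<noteq> 0"
  shows "c *\<^sub>C a (\<eta> (inverse c *\<^sub>C y)) = a (\<eta> y)"
  using assms by (simp add: bounded_clinear_scaleC scaleC_scaleC scaleC_one)

theorem theorem3p11:
  fixes a b :: "'a::chilbert_space \<Rightarrow> 'a"
  assumes sep: "separable_space TYPE('a)"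
    and ba: "bounded_clinear a" and bb: "bounded_clinear b"
    and nonzero: "\<exists>\<eta>. hilbert_schmidt \<eta> \<and> (\<lambda>x. a (\<eta> (b x))) \<noteq> (\<lambda>_. 0)"
    and Anonneg: "hs_op_nonneg (\<lambda>\<eta> x. a (\<eta> (b x)))"
  shows "\<exists>ah bh. bounded_clinear ah \<and> bounded_clinear bh \<and> op_nonneg ah \<and> op_nonneg bh \<and>
           (\<forall>\<eta>. hilbert_schmidt \<eta> \<longrightarrow> (\<lambda>x. a (\<eta> (b x))) = (\<lambda>x. ah (\<eta> (bh x)))) \<and>
           (hs_op_pos (\<lambda>\<eta> x. a (\<eta> (b x))) \<longrightarrow> op_pos ah \<and> op_pos bh) \<and>
           (hs_op_posdef (\<lambda>\<eta> x. a (\<eta> (b x))) \<longrightarrow> op_posdef ah \<and> op_posdef bh)"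
proof -
  obtain \<eta>0 z0 where "hilbert_schmidt \<eta>0" and nz0: "a (\<eta>0 (b z0)) \<noteq> 0"
    using nonzero by fast
  then obtain E :: "'a set" where onb: "is_onb E" and \<eta>0: "bounded_clinear \<eta>0"
    unfolding hilbert_schmidt_def by blast
  obtain x0 y0 where x0: "cinner x0 (a x0) \<noteq> 0" and y0: "cinner y0 (b y0) \<noteq> 0"
    using quadratic_forms_nonzero_if_sandwich_nonzero[OF ba bb \<eta>0 nz0] .
  obtain c where c: "c \<noteq> 0" "\<And>x. 0 \<le> c * cinner x (a x)" "\<And>y. 0 \<le> cinner y (b y) / c"
    using common_phase_if_products_nonneg[where f = "\<lambda>x. cinner x (a x)" and g = "\<lambda>y. cinner y (b y)",
        OF forms_product_nonneg_if_hs_op_nonneg[OF onb ba bb Anonneg] x0 y0] by blast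
  define ah where "ah = (\<lambda>x. c *\<^sub>C a x)"
  define bh where "bh = (\<lambda>x. inverse c *\<^sub>C b x)"
  have bounded: "bounded_clinear ah" "bounded_clinear bh"
    unfolding ah_def bh_def using ba bb by (simp_all add: bounded_clinear_scaleC_left)
  have nonneg: "op_nonneg ah" "op_nonneg bh"
    using c(2,3) by (simp_all add: op_nonneg_def ah_def bh_def cinner_scaleC_right divide_inverse
        mult.commute)
  have same: "(\<lambda>x. a (\<eta> (b x))) = (\<lambda>x. ah (\<eta> (bh x)))" if "hilbert_schmidt \<eta>" for \<eta>
    using that c(1) ba unfolding hilbert_schmidt_def ah_def bh_def
    by (simp add: scaleC_sandwich_cancel)
  then have "hs_op_pos (\<lambda>\<eta> x. a (\<eta> (b x))) = hs_op_pos (\<lambda>\<eta> x. ah (\<eta> (bh x)))"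
    "hs_op_posdef (\<lambda>\<eta> x. a (\<eta> (b x))) = hs_op_posdef (\<lambda>\<eta> x. ah (\<eta> (bh x)))"
    by (rule hs_op_order_cong; simp)+
  with bounded nonneg same op_pos_op_posdef_of_nonneg_factors[OF onb bounded nonneg]
  show ?thesis by blast
qed

end
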